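(* For every natural number $n \geq 2$, there exists a regular graph $G_n$ with $\chi(G_n) = n = \gamma(G_n)$.
   Context: All graphs are finite and simple; $\chi$ denotes chromatic number. A set $D \subseteq V(G)$ is a total dominating set of $G$ if every vertex of $V(G)$ is adjacent to some vertex of $D$. Define $\gamma(G) := \min\{\chi(G[D]) : D \text{ a total dominating set of } G\}$, where $G[D]$ is the subgraph induced by $D$. *)

theory Defs
  imports Main
begin

definition simple_graph :: "'a set \<Rightarrow> ('a \<Rightarrow> 'a \<Rightarrow> bool) \<Rightarrow> bool" where
  "simple_graph V E \<longleftrightarrow> finite V \<and> (\<forall>u v. E u v \<longrightarrow> u \<in> V \<and> v \<in> V)
     \<and> (\<forall>u v. E u v \<longrightarrow> E v u) \<and> (\<forall>v. \<not> E v v)"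

definition regular_graph :: "'a set \<Rightarrow> ('a \<Rightarrow> 'a \<Rightarrow> bool) \<Rightarrow> bool" where
  "regular_graph V E \<longleftrightarrow> (\<exists>d. \<forall>v\<in>V. card {u \<in> V. E v u} = d)"

definition colouring :: "'a set \<Rightarrow> ('a \<Rightarrow> 'a \<Rightarrow> bool) \<Rightarrow> nat \<Rightarrow> ('a \<Rightarrow> nat) \<Rightarrow> bool" where
  "colouring V E k f \<longleftrightarrow> (\<forall>v\<in>V. f v < k) \<and> (\<forall>u\<in>V. \<forall>v\<in>V. E u v \<longrightarrow> f u \<noteq> f v)"

definition chromatic_number :: "'a set \<Rightarrow> ('a \<Rightarrow> 'a \<Rightarrow> bool) \<Rightarrow> nat" where
  "chromatic_number V E = (LEAST k. \<exists>f. colouring V E k f)"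

definition induced_edges :: "('a \<Rightarrow> 'a \<Rightarrow> bool) \<Rightarrow> 'a set \<Rightarrow> 'a \<Rightarrow> 'a \<Rightarrow> bool" where
  "induced_edges E D = (\<lambda>u v. E u v \<and> u \<in> D \<and> v \<in> D)"

definition total_dominating_set :: "'a set \<Rightarrow> ('a \<Rightarrow> 'a \<Rightarrow> bool) \<Rightarrow> 'a set \<Rightarrow> bool" where
  "total_dominating_set V E D \<longleftrightarrow> D \<subseteq> V \<and> (\<forall>v\<in>V. \<exists>u\<in>D. E v u)"

text \<open>gamma(G) = min chi(G[D]) over total dominating sets D (meaningful when
  a total dominating set exists).\<close>
definition gamma_td :: "'a set \<Rightarrow> ('a \<Rightarrow> 'a \<Rightarrow> bool) \<Rightarrow> nat" where
  "gamma_td V E = Min {chromatic_number D (induced_edges E D) | D. total_dominating_set V E D}"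

end

theory Submission
  imports Defs "HOL-Library.FuncSet"
begin

text \<open>Take n + 1 copies, indexed by j \<le> n, of the complete n-partite graph whose parts,
  indexed by i < n, all have size t = n (n - 1)^n. For every copy m, colour c and choice h of a
  part h j \<noteq> c in each other copy j, add an independent selector vertex joined to the whole
  part h j of every copy j \<noteq> m. Colouring vertices by their part, and selectors by c, is proper.
  Let D be a total dominating set. If some copy meets every part, D contains an n-clique.
  Otherwise every copy j misses a part g j; two copies miss the same part, so after deleting a
  third copy m the remaining values of g avoid some colour c, and the selector (m, c, g) has no
  neighbour in D. The value of t makes the graph regular of degree n t: a part vertex has
  (n - 1) t neighbours in its copy and n (n - 1) (n - 1)^(n - 1) = t selector neighbours.\<close>

lemma colouring_cong:
  assumes "colouring V E k f" and "\<And>v. v \<in> V \<Longrightarrow> f v = g v"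
  shows "colouring V E k g"
  using assms unfolding colouring_def by metis

lemma colouring_induced_edges:
  assumes "colouring V E k f" and "D \<subseteq> V"
  shows "colouring D (induced_edges E D) k f"
  using assms unfolding colouring_def induced_edges_def by blast

lemma colouring_clique_le:
  fixes w :: "nat \<Rightarrow> 'a"
  assumes f: "colouring V E k f" and w: "\<And>i. i < n \<Longrightarrow> w i \<in> V"
    and clique: "\<And>i i'. i < n \<Longrightarrow> i' < n \<Longrightarrow> i \<noteq> i' \<Longrightarrow> E (w i) (w i')"
  shows "n \<le> k"
proof -
  have "inj_on (f \<circ> w) {..<n}"
    using f w clique unfolding colouring_def inj_on_def by (metis comp_apply lessThan_iff)
  moreover have "(f \<circ> w) ` {..<n} \<subseteq> {..<k}"
    using f w unfolding colouring_def by auto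
  ultimately show ?thesis
    using card_inj_on_le[of "f \<circ> w" "{..<n}" "{..<k}"] by simp
qed

lemma induced_edges_self:
  assumes "simple_graph V E"
  shows "induced_edges E V = E"
  using assms unfolding induced_edges_def simple_graph_def by (intro ext) blast

lemma chromatic_number_eqI:
  assumes "colouring V E n f" and "\<And>k g. colouring V E k g \<Longrightarrow> n \<le> k"
  shows "chromatic_number V E = n"
  unfolding chromatic_number_def using assms by (intro Least_equality) auto

lemma chromatic_number_gamma_td_eqI:
  assumes simple: "simple_graph V E" and f: "colouring V E n f"
    and dom: "total_dominating_set V E V"
    and lower: "\<And>D k g. total_dominating_set V E D \<Longrightarrow> colouring D (induced_edges E D) k g \<Longrightarrow> n \<le> k"
  shows "chromatic_number V E = n" and "gamma_td V E = n"
proof -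
  have tds_chromatic: "chromatic_number D (induced_edges E D) = n"
    if D: "total_dominating_set V E D" for D
  proof (rule chromatic_number_eqI)
    show "colouring D (induced_edges E D) n f"
      using f D colouring_induced_edges unfolding total_dominating_set_def by blast
  qed (rule lower[OF D])
  show "chromatic_number V E = n"
    using tds_chromatic[OF dom] by (simp add: induced_edges_self[OF simple])
  have "{chromatic_number D (induced_edges E D) | D. total_dominating_set V E D} = {n}"
    using tds_chromatic dom by blast
  then show "gamma_td V E = n"
    unfolding gamma_td_def by simp
qed

definition image_edges :: "('a \<Rightarrow> 'b) \<Rightarrow> 'a set \<Rightarrow> ('a \<Rightarrow> 'a \<Rightarrow> bool) \<Rightarrow> 'b \<Rightarrow> 'b \<Rightarrow> bool" where
  "image_edges \<phi> V E u v \<longleftrightarrow> (\<exists>x\<in>V. \<exists>y\<in>V. u = \<phi> x \<and> v = \<phi> y \<and> E x y)"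

lemma image_edges_image_iff:
  assumes "inj_on \<phi> V" and "x \<in> V" and "y \<in> V"
  shows "image_edges \<phi> V E (\<phi> x) (\<phi> y) \<longleftrightarrow> E x y"
  using assms unfolding image_edges_def inj_on_def by blast

lemma simple_graph_image:
  assumes "simple_graph V E" and "inj_on \<phi> V"
  shows "simple_graph (\<phi> ` V) (image_edges \<phi> V E)"
  using assms unfolding simple_graph_def image_edges_def inj_on_def by blast

lemma regular_graph_image:
  assumes "regular_graph V E" and inj: "inj_on \<phi> V"
  shows "regular_graph (\<phi> ` V) (image_edges \<phi> V E)"
proof -
  obtain d where d: "\<And>v. v \<in> V \<Longrightarrow> card {u \<in> V. E v u} = d"
    using assms(1) unfolding regular_graph_def by blast
  have "card {u \<in> \<phi> ` V. image_edges \<phi> V E (\<phi> v) u} = d" if v: "v \<in> V" for v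
  proof -
    have "{u \<in> \<phi> ` V. image_edges \<phi> V E (\<phi> v) u} = \<phi> ` {u \<in> V. E v u}"
      using image_edges_image_iff[OF inj v] by auto
    moreover have "inj_on \<phi> {u \<in> V. E v u}"
      using inj by (rule inj_on_subset) blast
    ultimately show ?thesis
      by (simp add: card_image d[OF v])
  qed
  then show ?thesis
    unfolding regular_graph_def by blast
qed

lemma colouring_image_iff:
  "colouring (\<phi> ` V) (image_edges \<phi> V E) k g \<longleftrightarrow> colouring V E k (g \<circ> \<phi>)"
proof
  assume "colouring (\<phi> ` V) (image_edges \<phi> V E) k g"
  moreover have "image_edges \<phi> V E (\<phi> u) (\<phi> v)" if "u \<in> V" "v \<in> V" "E u v" for u v
    using that unfolding image_edges_def by blast
  ultimately show "colouring V E k (g \<circ> \<phi>)"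
    unfolding colouring_def by simp
next
  assume "colouring V E k (g \<circ> \<phi>)"
  then show "colouring (\<phi> ` V) (image_edges \<phi> V E) k g"
    unfolding colouring_def image_edges_def by auto
qed

lemma chromatic_number_image:
  assumes "inj_on \<phi> V"
  shows "chromatic_number (\<phi> ` V) (image_edges \<phi> V E) = chromatic_number V E"
proof -
  have "(\<exists>g. colouring (\<phi> ` V) (image_edges \<phi> V E) k g) \<longleftrightarrow> (\<exists>f. colouring V E k f)" for k
  proof
    assume "\<exists>f. colouring V E k f"
    then obtain f where f: "colouring V E k f" ..
    have "colouring V E k (f \<circ> inv_into V \<phi> \<circ> \<phi>)"
      using f by (rule colouring_cong) (simp add: assms)
    then show "\<exists>g. colouring (\<phi> ` V) (image_edges \<phi> V E) k g"
      unfolding colouring_image_iff by blast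
  qed (auto simp: colouring_image_iff)
  then show ?thesis
    unfolding chromatic_number_def by simp
qed

lemma induced_edges_image:
  assumes inj: "inj_on \<phi> V" and D: "D \<subseteq> V"
  shows "induced_edges (image_edges \<phi> V E) (\<phi> ` D) = image_edges \<phi> D (induced_edges E D)"
proof (intro ext)
  fix u v
  have "image_edges \<phi> V E (\<phi> x) (\<phi> y) \<longleftrightarrow> image_edges \<phi> D (induced_edges E D) (\<phi> x) (\<phi> y)"
    if "x \<in> D" "y \<in> D" for x y
  proof -
    have "x \<in> V" "y \<in> V"
      using that D by auto
    with that show ?thesis
      by (simp add: image_edges_image_iff[OF inj] image_edges_image_iff[OF inj_on_subset[OF inj D]]
          induced_edges_def)
  qed
  moreover have "image_edges \<phi> D F u v \<Longrightarrow> u \<in> \<phi> ` D \<and> v \<in> \<phi> ` D" for F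
    unfolding image_edges_def by blast
  ultimately show "induced_edges (image_edges \<phi> V E) (\<phi> ` D) u v = image_edges \<phi> D (induced_edges E D) u v"
    unfolding induced_edges_def by blast
qed

lemma total_dominating_set_image_iff:
  assumes "inj_on \<phi> V" and "D \<subseteq> V"
  shows "total_dominating_set (\<phi> ` V) (image_edges \<phi> V E) (\<phi> ` D) \<longleftrightarrow> total_dominating_set V E D"
  using assms unfolding total_dominating_set_def image_edges_def inj_on_def by blast

lemma gamma_td_image:
  assumes inj: "inj_on \<phi> V"
  shows "gamma_td (\<phi> ` V) (image_edges \<phi> V E) = gamma_td V E"
proof -
  have chi: "chromatic_number (\<phi> ` D) (induced_edges (image_edges \<phi> V E) (\<phi> ` D))
      = chromatic_number D (induced_edges E D)" if "D \<subseteq> V" for D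
    using that inj by (simp add: induced_edges_image chromatic_number_image inj_on_subset)
  have "{chromatic_number D' (induced_edges (image_edges \<phi> V E) D') | D'.
          total_dominating_set (\<phi> ` V) (image_edges \<phi> V E) D'}
      = {chromatic_number D (induced_edges E D) | D. total_dominating_set V E D}"
  proof (intro equalityI subsetI; elim CollectE exE conjE)
    fix x D' assume x: "x = chromatic_number D' (induced_edges (image_edges \<phi> V E) D')"
      and D': "total_dominating_set (\<phi> ` V) (image_edges \<phi> V E) D'"
    define D where "D = V \<inter> \<phi> -` D'"
    have "D' = \<phi> ` D" "D \<subseteq> V"
      using D' unfolding D_def total_dominating_set_def by auto
    moreover have "total_dominating_set V E D"
      using D' \<open>D' = \<phi> ` D\<close> total_dominating_set_image_iff[OF inj \<open>D \<subseteq> V\<close>] by simp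
    moreover have "x = chromatic_number D (induced_edges E D)"
      using x chi[OF \<open>D \<subseteq> V\<close>] \<open>D' = \<phi> ` D\<close> by simp
    ultimately show "x \<in> {chromatic_number D (induced_edges E D) | D. total_dominating_set V E D}"
      by blast
  next
    fix x D assume x: "x = chromatic_number D (induced_edges E D)"
      and D: "total_dominating_set V E D"
    then have DV: "D \<subseteq> V"
      unfolding total_dominating_set_def by blast
    have "total_dominating_set (\<phi> ` V) (image_edges \<phi> V E) (\<phi> ` D)"
      using D total_dominating_set_image_iff[OF inj DV] by simp
    moreover have "x = chromatic_number (\<phi> ` D) (induced_edges (image_edges \<phi> V E) (\<phi> ` D))"
      using x chi[OF DV] by simp
    ultimately show "x \<in> {chromatic_number D' (induced_edges (image_edges \<phi> V E) D') | D'.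
          total_dominating_set (\<phi> ` V) (image_edges \<phi> V E) D'}"
      by blast
  qed
  then show ?thesis
    unfolding gamma_td_def by simp
qed

lemma PiE_fun_upd_singleton:
  assumes "j \<in> A" and "i \<in> B j"
  shows "PiE A (B(j := {i})) = {h \<in> PiE A B. h j = i}"
proof (intro set_eqI iffI)
  fix h assume h: "h \<in> PiE A (B(j := {i}))"
  have "h j = i"
    using PiE_mem[OF h assms(1)] by simp
  moreover have "h \<in> PiE A B"
  proof (rule PiE_I)
    show "h x \<in> B x" if "x \<in> A" for x
      using PiE_mem[OF h that] \<open>h j = i\<close> assms(2) by (cases "x = j") simp_all
  qed (use h in auto)
  ultimately show "h \<in> {h \<in> PiE A B. h j = i}"
    by blast
next
  fix h assume "h \<in> {h \<in> PiE A B. h j = i}"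
  then have h: "h \<in> PiE A B" "h j = i"
    by auto
  show "h \<in> PiE A (B(j := {i}))"
  proof (rule PiE_I)
    show "h x \<in> (B(j := {i})) x" if "x \<in> A" for x
      using PiE_mem[OF h(1) that] h(2) by (cases "x = j") simp_all
  qed (use h in auto)
qed

lemma card_PiE_fun_upd_singleton:
  assumes "finite A" and "j \<in> A"
  shows "card (PiE A ((\<lambda>_. S)(j := {i}))) = card S ^ (card A - 1)"
proof -
  have "card (PiE A ((\<lambda>_. S)(j := {i}))) = (\<Prod>a\<in>A. card (((\<lambda>_. S)(j := {i})) a))"
    by (rule card_PiE[OF assms(1)])
  also have "\<dots> = card {i} * (\<Prod>a\<in>A - {j}. card S)"
    using assms by (simp add: prod.remove)
  also have "\<dots> = card S ^ (card A - 1)"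
    using assms by simp
  finally show ?thesis .
qed

lemma missed_colour_after_deleting_point:
  fixes g :: "nat \<Rightarrow> nat"
  assumes n: "2 \<le> n" and g: "\<And>j. j \<le> n \<Longrightarrow> g j < n"
  obtains m c where "m \<le> n" "c < n" "\<And>j. j \<le> n \<Longrightarrow> j \<noteq> m \<Longrightarrow> g j \<noteq> c"
proof -
  have "\<not> inj_on g {..n}"
  proof
    assume "inj_on g {..n}"
    then have "card {..n} \<le> card {..<n}"
      using g by (intro card_inj_on_le) auto
    then show False
      by simp
  qed
  then obtain a b where ab: "a \<le> n" "b \<le> n" "a \<noteq> b" "g a = g b"
    unfolding inj_on_def by auto
  have "\<exists>m\<in>{0, 1, 2}. m \<noteq> a \<and> m \<noteq> b"
    by auto
  then obtain m where "m \<in> {0, 1, 2}" "m \<noteq> a" "m \<noteq> b"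
    by blast
  with n have m: "m \<le> n" "m \<noteq> a" "m \<noteq> b"
    by auto
  let ?A = "{..n} - {m}"
  have "g ` ?A \<subseteq> g ` (?A - {b})"
  proof
    fix y assume "y \<in> g ` ?A"
    then obtain x where "x \<in> ?A" "y = g x"
      by blast
    then show "y \<in> g ` (?A - {b})"
      using ab m by (cases "x = b") (auto intro: image_eqI[of _ g a])
  qed
  then have "g ` ?A = g ` (?A - {b})"
    by blast
  then have "card (g ` ?A) \<le> n - 1"
    using card_image_le[of "?A - {b}" g] ab m n by simp
  then have "g ` ?A \<noteq> {..<n}"
    using n by auto
  moreover have "g ` ?A \<subseteq> {..<n}"
    using g by auto
  ultimately obtain c where c: "c < n" "c \<notin> g ` ?A"
    by blast
  show thesis
  proof (rule that[OF m(1) c(1)])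
    show "g j \<noteq> c" if "j \<le> n" "j \<noteq> m" for j
      using c(2) that by auto
  qed
qed

definition blowup :: "nat \<Rightarrow> nat" where
  "blowup n = n * (n - 1) ^ n"

lemma blowup_pos: "2 \<le> n \<Longrightarrow> 0 < blowup n"
  unfolding blowup_def by simp

text \<open>Inl (j, i, k) is the k-th vertex of part i in copy j; Inr (m, c, h) is a selector,
  with h extensional so that distinct selectors are distinct functions.\<close>
type_synonym gn_vertex = "(nat \<times> nat \<times> nat) + (nat \<times> nat \<times> (nat \<Rightarrow> nat))"

definition selectors :: "nat \<Rightarrow> nat \<Rightarrow> nat \<Rightarrow> (nat \<Rightarrow> nat) set" where
  "selectors n m c = PiE ({..n} - {m}) (\<lambda>_. {..<n} - {c})"

definition gn_vertices :: "nat \<Rightarrow> gn_vertex set" where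
  "gn_vertices n = Inl ` ({..n} \<times> {..<n} \<times> {..<blowup n})
     \<union> Inr ` (SIGMA m:{..n}. SIGMA c:{..<n}. selectors n m c)"

fun gn_adj :: "gn_vertex \<Rightarrow> gn_vertex \<Rightarrow> bool" where
  "gn_adj (Inl (j, i, _)) (Inl (j', i', _)) \<longleftrightarrow> j = j' \<and> i \<noteq> i'"
| "gn_adj (Inl (j, i, _)) (Inr (m, _, h)) \<longleftrightarrow> j \<noteq> m \<and> h j = i"
| "gn_adj (Inr (m, _, h)) (Inl (j, i, _)) \<longleftrightarrow> j \<noteq> m \<and> h j = i"
| "gn_adj (Inr _) (Inr _) \<longleftrightarrow> False"

definition gn_edges :: "nat \<Rightarrow> gn_vertex \<Rightarrow> gn_vertex \<Rightarrow> bool" where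
  "gn_edges n u v \<longleftrightarrow> u \<in> gn_vertices n \<and> v \<in> gn_vertices n \<and> gn_adj u v"

fun gn_colour :: "gn_vertex \<Rightarrow> nat" where
  "gn_colour (Inl (_, i, _)) = i"
| "gn_colour (Inr (_, c, _)) = c"

lemma Inl_in_gn_vertices_iff [simp]:
  "Inl (j, i, k) \<in> gn_vertices n \<longleftrightarrow> j \<le> n \<and> i < n \<and> k < blowup n"
  unfolding gn_vertices_def by auto

lemma Inr_in_gn_vertices_iff [simp]:
  "Inr (m, c, h) \<in> gn_vertices n \<longleftrightarrow> m \<le> n \<and> c < n \<and> h \<in> selectors n m c"
  unfolding gn_vertices_def by auto

lemma selectors_apply:
  assumes "h \<in> selectors n m c" and "j \<le> n" and "j \<noteq> m"
  shows "h j < n" and "h j \<noteq> c"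
  using PiE_mem[OF assms(1)[unfolded selectors_def], of j] assms(2,3) by auto

lemma finite_selectors: "finite (selectors n m c)"
  unfolding selectors_def by (auto intro!: finite_PiE)

lemma finite_gn_vertices: "finite (gn_vertices n)"
  unfolding gn_vertices_def by (auto intro!: finite_selectors)

lemma simple_graph_gn: "simple_graph (gn_vertices n) (gn_edges n)"
proof -
  have "gn_adj u v \<Longrightarrow> gn_adj v u" "\<not> gn_adj u u" for u v
    by (cases u; cases v; auto)+
  then show ?thesis
    unfolding simple_graph_def gn_edges_def using finite_gn_vertices by blast
qed

lemma colouring_gn: "colouring (gn_vertices n) (gn_edges n) n gn_colour"
  unfolding colouring_def
proof (intro conjI ballI impI)
  fix v assume "v \<in> gn_vertices n"
  then show "gn_colour v < n"
    unfolding gn_vertices_def by auto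
next
  fix u v assume "u \<in> gn_vertices n" "v \<in> gn_vertices n" "gn_edges n u v"
  then show "gn_colour u \<noteq> gn_colour v"
    unfolding gn_vertices_def gn_edges_def by (auto dest: selectors_apply)
qed

lemma gn_neighbours_Inr:
  assumes "Inr (m, c, h) \<in> gn_vertices n"
  shows "{u \<in> gn_vertices n. gn_edges n (Inr (m, c, h)) u}
    = Inl ` (SIGMA j:{..n} - {m}. {h j} \<times> {..<blowup n})"
proof (intro set_eqI iffI)
  fix u assume "u \<in> {u \<in> gn_vertices n. gn_edges n (Inr (m, c, h)) u}"
  then show "u \<in> Inl ` (SIGMA j:{..n} - {m}. {h j} \<times> {..<blowup n})"
    unfolding gn_vertices_def gn_edges_def by auto
next
  fix u :: gn_vertex assume "u \<in> Inl ` (SIGMA j:{..n} - {m}. {h j} \<times> {..<blowup n})"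
  then show "u \<in> {u \<in> gn_vertices n. gn_edges n (Inr (m, c, h)) u}"
    using assms by (auto simp: gn_edges_def dest: selectors_apply)
qed

lemma gn_degree_Inr:
  assumes "Inr (m, c, h) \<in> gn_vertices n"
  shows "card {u \<in> gn_vertices n. gn_edges n (Inr (m, c, h)) u} = n * blowup n"
proof -
  have "card (SIGMA j:{..n} - {m}. {h j} \<times> {..<blowup n}) = card ({..n} - {m}) * blowup n"
    by (simp add: card_SigmaI card_cartesian_product)
  also have "card ({..n} - {m}) = n"
    using assms by simp
  finally show ?thesis
    by (simp add: gn_neighbours_Inr[OF assms] card_image)
qed

lemma gn_neighbours_Inl:
  assumes "Inl (j, i, k) \<in> gn_vertices n"
  shows "{u \<in> gn_vertices n. gn_edges n (Inl (j, i, k)) u}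
    = Inl ` ({j} \<times> ({..<n} - {i}) \<times> {..<blowup n})
      \<union> Inr ` (SIGMA m:{..n} - {j}. SIGMA c:{..<n} - {i}. {h \<in> selectors n m c. h j = i})"
proof (intro set_eqI iffI)
  fix u assume "u \<in> {u \<in> gn_vertices n. gn_edges n (Inl (j, i, k)) u}"
  then show "u \<in> Inl ` ({j} \<times> ({..<n} - {i}) \<times> {..<blowup n})
      \<union> Inr ` (SIGMA m:{..n} - {j}. SIGMA c:{..<n} - {i}. {h \<in> selectors n m c. h j = i})"
    using assms unfolding gn_vertices_def gn_edges_def by (auto dest: selectors_apply)
next
  fix u :: gn_vertex assume "u \<in> Inl ` ({j} \<times> ({..<n} - {i}) \<times> {..<blowup n})
      \<union> Inr ` (SIGMA m:{..n} - {j}. SIGMA c:{..<n} - {i}. {h \<in> selectors n m c. h j = i})"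
  then show "u \<in> {u \<in> gn_vertices n. gn_edges n (Inl (j, i, k)) u}"
    using assms by (auto simp: gn_edges_def)
qed

lemma card_selectors_through:
  assumes "m \<le> n" "j \<le> n" "j \<noteq> m" "c < n" "i < n" "i \<noteq> c"
  shows "card {h \<in> selectors n m c. h j = i} = (n - 1) ^ (n - 1)"
proof -
  have "{h \<in> selectors n m c. h j = i} = PiE ({..n} - {m}) ((\<lambda>_. {..<n} - {c})(j := {i}))"
    unfolding selectors_def using assms by (simp add: PiE_fun_upd_singleton)
  also have "card \<dots> = card ({..<n} - {c}) ^ (card ({..n} - {m}) - 1)"
    using assms by (intro card_PiE_fun_upd_singleton) auto
  finally show ?thesis
    using assms by simp
qed

lemma gn_degree_Inl:
  assumes n: "0 < n" and v: "Inl (j, i, k) \<in> gn_vertices n"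
  shows "card {u \<in> gn_vertices n. gn_edges n (Inl (j, i, k)) u} = n * blowup n"
proof -
  let ?L = "{j} \<times> ({..<n} - {i}) \<times> {..<blowup n}"
  let ?R = "SIGMA m:{..n} - {j}. SIGMA c:{..<n} - {i}. {h \<in> selectors n m c. h j = i}"
  have ji: "j \<le> n" "i < n"
    using v by auto
  have "finite ?R"
    by (auto intro!: finite_SigmaI finite_selectors)
  then have "card {u \<in> gn_vertices n. gn_edges n (Inl (j, i, k)) u}
      = card (Inl ` ?L :: gn_vertex set) + card (Inr ` ?R :: gn_vertex set)"
    unfolding gn_neighbours_Inl[OF v] by (intro card_Un_disjoint) auto
  also have "\<dots> = card ?L + card ?R"
    by (simp add: card_image)
  also have "card ?L = (n - 1) * blowup n"
    using ji by (simp add: card_cartesian_product)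
  also have "card ?R = (\<Sum>m\<in>{..n} - {j}. \<Sum>c\<in>{..<n} - {i}. card {h \<in> selectors n m c. h j = i})"
    by (simp add: card_SigmaI finite_selectors)
  also have "\<dots> = (\<Sum>m\<in>{..n} - {j}. \<Sum>c\<in>{..<n} - {i}. (n - 1) ^ (n - 1))"
    using ji by (intro sum.cong refl) (simp add: card_selectors_through)
  also have "\<dots> = n * ((n - 1) * (n - 1) ^ (n - 1))"
    using ji by simp
  also have "(n - 1) * blowup n + n * ((n - 1) * (n - 1) ^ (n - 1)) = n * blowup n"
  proof -
    have "n * ((n - 1) * (n - 1) ^ (n - 1)) = blowup n"
      using n by (simp add: blowup_def power_eq_if)
    then show ?thesis
      using n by (simp add: algebra_simps)
  qed
  finally show ?thesis .
qed

lemma regular_graph_gn: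
  assumes "0 < n"
  shows "regular_graph (gn_vertices n) (gn_edges n)"
  unfolding regular_graph_def
proof (intro exI ballI)
  fix v assume v: "v \<in> gn_vertices n"
  show "card {u \<in> gn_vertices n. gn_edges n v u} = n * blowup n"
  proof (cases v)
    case (Inl x)
    then show ?thesis
      using v gn_degree_Inl[OF assms] by (cases x) auto
  next
    case (Inr x)
    then show ?thesis
      using v gn_degree_Inr by (cases x) auto
  qed
qed

lemma total_dominating_set_gn_vertices:
  assumes n: "2 \<le> n"
  shows "total_dominating_set (gn_vertices n) (gn_edges n) (gn_vertices n)"
  unfolding total_dominating_set_def
proof (intro conjI ballI subset_refl)
  fix v assume v: "v \<in> gn_vertices n"
  show "\<exists>u\<in>gn_vertices n. gn_edges n v u"
  proof (cases v)
    case (Inl x)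
    then obtain j i k where v_eq: "v = Inl (j, i, k)"
      by (cases x) auto
    let ?u = "Inl (j, if i = 0 then 1 else 0, 0) :: gn_vertex"
    have "?u \<in> gn_vertices n" "gn_edges n v ?u"
      using v n blowup_pos[OF n] by (auto simp: v_eq gn_edges_def)
    then show ?thesis
      by blast
  next
    case (Inr x)
    then obtain m c h where v_eq: "v = Inr (m, c, h)"
      by (cases x) auto
    define j where "j = (if m = 0 then 1 else 0 :: nat)"
    have j: "j \<le> n" "j \<noteq> m"
      using n by (auto simp: j_def)
    let ?u = "Inl (j, h j, 0) :: gn_vertex"
    have "?u \<in> gn_vertices n" "gn_edges n v ?u"
      using v j blowup_pos[OF n] by (auto simp: v_eq gn_edges_def dest: selectors_apply)
    then show ?thesis
      by blast
  qed
qed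

lemma total_dominating_set_gn_meets_all_parts:
  assumes n: "2 \<le> n" and D: "total_dominating_set (gn_vertices n) (gn_edges n) D"
  obtains j where "j \<le> n" and "\<And>i. i < n \<Longrightarrow> \<exists>k. Inl (j, i, k) \<in> D"
proof -
  have "\<exists>j\<le>n. \<forall>i<n. \<exists>k. Inl (j, i, k) \<in> D"
  proof (rule ccontr)
    assume "\<not> ?thesis"
    then obtain g where g: "\<And>j. j \<le> n \<Longrightarrow> g j < n \<and> (\<forall>k. Inl (j, g j, k) \<notin> D)"
      by (metis not_less)
    obtain m c where m: "m \<le> n" and c: "c < n" and missed: "\<And>j. j \<le> n \<Longrightarrow> j \<noteq> m \<Longrightarrow> g j \<noteq> c"
      using missed_colour_after_deleting_point[OF n] g by metis
    define h where "h = restrict g ({..n} - {m})"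
    have "h \<in> selectors n m c"
      using g missed unfolding selectors_def h_def by auto
    then have "Inr (m, c, h) \<in> gn_vertices n"
      using m c by simp
    then obtain u where u: "u \<in> D" "gn_edges n (Inr (m, c, h)) u"
      using D unfolding total_dominating_set_def by blast
    show False
    proof (cases u)
      case (Inl x)
      then obtain j i k where u_eq: "u = Inl (j, i, k)"
        by (cases x) auto
      then have "j \<le> n" "j \<noteq> m" "i = g j"
        using u(2) by (auto simp: gn_edges_def h_def)
      then show False
        using g u(1) u_eq by blast
    next
      case (Inr x)
      then show False
        using u(2) by (cases x) (simp add: gn_edges_def)
    qed
  qed
  then show thesis
    using that by blast
qed

lemma total_dominating_set_gn_colouring_ge:
  assumes n: "2 \<le> n" and D: "total_dominating_set (gn_vertices n) (gn_edges n) D"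
    and f: "colouring D (induced_edges (gn_edges n) D) k f"
  shows "n \<le> k"
proof -
  obtain j where j: "j \<le> n" and parts: "\<And>i. i < n \<Longrightarrow> \<exists>k. Inl (j, i, k) \<in> D"
    using total_dominating_set_gn_meets_all_parts[OF n D] by blast
  obtain w where w: "\<And>i. i < n \<Longrightarrow> Inl (j, i, w i) \<in> D"
    using parts by metis
  have in_V: "Inl (j, i, w i) \<in> gn_vertices n" if "i < n" for i
    using D w[OF that] unfolding total_dominating_set_def by blast
  show ?thesis
  proof (rule colouring_clique_le[OF f])
    show "Inl (j, i, w i) \<in> D" if "i < n" for i
      using w that .
    show "induced_edges (gn_edges n) D (Inl (j, i, w i)) (Inl (j, i', w i'))"
      if "i < n" "i' < n" "i \<noteq> i'" for i i'
      using w in_V that by (simp add: induced_edges_def gn_edges_def)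
  qed
qed

lemma gn_chromatic_number_gamma_td:
  assumes "2 \<le> n"
  shows "chromatic_number (gn_vertices n) (gn_edges n) = n"
    and "gamma_td (gn_vertices n) (gn_edges n) = n"
proof -
  have lower: "n \<le> k" if "total_dominating_set (gn_vertices n) (gn_edges n) D"
    and "colouring D (induced_edges (gn_edges n) D) k g" for D k g
    using total_dominating_set_gn_colouring_ge[OF assms that] .
  note facts = simple_graph_gn colouring_gn total_dominating_set_gn_vertices[OF assms] lower
  show "chromatic_number (gn_vertices n) (gn_edges n) = n"
    using facts by (rule chromatic_number_gamma_td_eqI(1))
  show "gamma_td (gn_vertices n) (gn_edges n) = n"
    using facts by (rule chromatic_number_gamma_td_eqI(2))
qed

theorem theorem1p4:
  fixes n :: nat
  assumes "n \<ge> 2"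
  shows "\<exists>(V :: nat set) E. simple_graph V E \<and> regular_graph V E
           \<and> chromatic_number V E = n
           \<and> (\<exists>D. total_dominating_set V E D)
           \<and> gamma_td V E = n"
proof -
  let ?V = "gn_vertices n" and ?E = "gn_edges n"
  obtain \<phi> :: "gn_vertex \<Rightarrow> nat" where \<phi>: "inj_on \<phi> ?V"
    using finite_imp_inj_to_nat_seg[OF finite_gn_vertices] by metis
  have "simple_graph (\<phi> ` ?V) (image_edges \<phi> ?V ?E)"
    using simple_graph_image[OF simple_graph_gn \<phi>] .
  moreover have "regular_graph (\<phi> ` ?V) (image_edges \<phi> ?V ?E)"
    using regular_graph_image[OF regular_graph_gn \<phi>] assms by simp
  moreover have "total_dominating_set (\<phi> ` ?V) (image_edges \<phi> ?V ?E) (\<phi> ` ?V)"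
    using total_dominating_set_image_iff[OF \<phi> subset_refl] total_dominating_set_gn_vertices[OF assms]
    by blast
  moreover have "chromatic_number (\<phi> ` ?V) (image_edges \<phi> ?V ?E) = n"
    and "gamma_td (\<phi> ` ?V) (image_edges \<phi> ?V ?E) = n"
    using chromatic_number_image[OF \<phi>] gamma_td_image[OF \<phi>] gn_chromatic_number_gamma_td[OF assms]
    by simp_all
  ultimately show ?thesis
    by blast
qed

end
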